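(* Let $G$ be a locally compact Abelian group. If $\nu$ is a finite measure on $G$ and $\mu$ is a norm almost periodic measure on $G$, then $\mu*\nu$ is norm almost periodic.
   Context: A finite measure has finite total variation. $\|\mu\|_K=\sup_t|\mu|(t+K)$; $T_t\mu$ is the translate of $\mu$ by $t$. A measure $\mu$ is norm almost periodic if for each $\epsilon>0$ the set $\{t:\|T_t\mu-\mu\|_K<\epsilon\}$ is relatively dense (i.e. $P+C=G$ for some compact $C$), for a fixed compact $K$ with non-empty interior; the notion is independent of $K$. *)

theory Defs
  imports "HOL-Analysis.Analysis"
begin

text \<open>Complex Radon measures on a locally compact Hausdorff space are represented
  in polar form  mu = h . M , where M = |mu| is a positive Radon measure on the
  Borel sets (locally finite, inner regular on open sets, outer regular) and
  h is a Borel function with  |h| = 1.  The measure, as a complex set function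
  on (relatively compact) Borel sets, is  A |-> integral over A of h dM.\<close>

definition radon_measure :: "'a::topological_space measure \<Rightarrow> bool" where
  "radon_measure M \<longleftrightarrow>
     sets M = sets borel \<and>
     (\<forall>K. compact K \<longrightarrow> emeasure M K < \<infinity>) \<and>
     (\<forall>U. open U \<longrightarrow> emeasure M U = (SUP K\<in>{K. compact K \<and> K \<subseteq> U}. emeasure M K)) \<and>
     (\<forall>B\<in>sets borel. emeasure M B = (INF U\<in>{U. open U \<and> B \<subseteq> U}. emeasure M U))"

definition complex_radon :: "'a::topological_space measure \<Rightarrow> ('a \<Rightarrow> complex) \<Rightarrow> bool" where
  "complex_radon M h \<longleftrightarrow> radon_measure M \<and> h \<in> borel_measurable M \<and> (\<forall>x. cmod (h x) = 1)"

definition finite_complex_radon :: "'a::topological_space measure \<Rightarrow> ('a \<Rightarrow> complex) \<Rightarrow> bool" where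
  "finite_complex_radon M h \<longleftrightarrow> complex_radon M h \<and> emeasure M (space M) < \<infinity>"

definition cmeas :: "'a measure \<Rightarrow> ('a \<Rightarrow> complex) \<Rightarrow> 'a set \<Rightarrow> complex" where
  "cmeas M h A = (LINT x:A|M. h x)"

definition conv_meas :: "'a::plus measure \<Rightarrow> ('a \<Rightarrow> complex) \<Rightarrow> 'a measure \<Rightarrow> ('a \<Rightarrow> complex)
    \<Rightarrow> 'a set \<Rightarrow> complex" where
  "conv_meas M h N g A = (\<integral>y. (\<integral>x. indicator A (x + y) * h x \<partial>M) * g y \<partial>N)"

definition tvar :: "('a::topological_space set \<Rightarrow> complex) \<Rightarrow> 'a set \<Rightarrow> ennreal" where
  "tvar \<mu> A = (SUP P\<in>{P. finite P \<and> disjoint P \<and> (\<forall>B\<in>P. B \<in> sets borel \<and> B \<subseteq> A)}.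
                  \<Sum>B\<in>P. ennreal (cmod (\<mu> B)))"

definition Knorm :: "'a::{topological_space,plus} set \<Rightarrow> ('a set \<Rightarrow> complex) \<Rightarrow> ennreal" where
  "Knorm K \<mu> = (SUP t. tvar \<mu> ((+) t ` K))"

definition translate :: "'a::group_add \<Rightarrow> ('a set \<Rightarrow> complex) \<Rightarrow> 'a set \<Rightarrow> complex" where
  "translate t \<mu> A = \<mu> ((+) (- t) ` A)"

definition relatively_dense :: "'a::{topological_space,plus} set \<Rightarrow> bool" where
  "relatively_dense P \<longleftrightarrow> (\<exists>C. compact C \<and> {p + c | p c. p \<in> P \<and> c \<in> C} = UNIV)"

definition norm_almost_periodic ::
    "'a::{topological_space,group_add} set \<Rightarrow> ('a set \<Rightarrow> complex) \<Rightarrow> bool" where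
  "norm_almost_periodic K \<mu> \<longleftrightarrow>
     (\<forall>\<epsilon>>0. relatively_dense {t. Knorm K (\<lambda>A. translate t \<mu> A - \<mu> A) < ennreal \<epsilon>})"

end

theory Submission
  imports Defs
begin

text \<open>For a set function \<mu> and the finite measure \<nu> = g N put
  (\<mu> * \<nu>)(B) = \<integral> \<mu>(B - y) d\<nu>(y). Then T_t(\<mu> * \<nu>) - \<mu> * \<nu> = (T_t \<mu> - \<mu>) * \<nu>, and for a Borel partition
  of a translate s + K the absolute values of T_t \<mu> - \<mu> on the shifted pieces B - y add up to at most
  \<parallel>T_t \<mu> - \<mu>\<parallel>_K, for every y. Integrating against |\<nu>| gives
  \<parallel>T_t(\<mu> * \<nu>) - \<mu> * \<nu>\<parallel>_K \<le> \<parallel>T_t \<mu> - \<mu>\<parallel>_K |\<nu>|(G), so every small almost period of \<mu> is an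
  almost period of \<mu> * \<nu>.

  Two measure-theoretic facts make this work. The norm \<parallel>\<mu>\<parallel>_K is finite, since every translate of
  K lies in a 1-almost period plus the compact set C + K. And y \<mapsto> \<mu>(B - y) is Borel: for compact B
  and a positive density it is upper semicontinuous by outer regularity, and the Borel sets B for
  which it is measurable form a Dynkin system.\<close>

section \<open>Translates and total variation\<close>

lemma borel_translation:
  fixes B :: "'a::topological_ab_group_add set"
  assumes "B \<in> sets borel"
  shows "(+) a ` B \<in> sets borel"
proof -
  have "(+) a ` B = (\<lambda>x. x - a) -` B"
    by (force simp: algebra_simps)
  moreover have "(\<lambda>x. x - a) \<in> borel_measurable borel"
    by (intro borel_measurable_continuous_onI continuous_intros)
  ultimately show ?thesis
    using assms by (simp add: measurable_sets_borel)
qed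

lemma compact_group_translation:
  fixes K :: "'a::topological_ab_group_add set"
  shows "compact K \<Longrightarrow> compact ((+) a ` K)"
  by (intro compact_continuous_image continuous_intros)

lemma compact_translation_nhd:
  fixes A :: "'a::topological_ab_group_add set"
  assumes "compact A" "open U" "(+) a ` A \<subseteq> U"
  obtains T where "open T" "a \<in> T" "\<And>b. b \<in> T \<Longrightarrow> (+) b ` A \<subseteq> U"
proof -
  have W: "open ((\<lambda>z. fst z + snd z) -` U)"
    using continuous_open_preimage[of UNIV "\<lambda>z::'a \<times> 'a. fst z + snd z" U] assms(2)
    by (simp add: continuous_intros)
  have "{a} \<times> A \<subseteq> (\<lambda>z. fst z + snd z) -` U"
    using assms(3) by auto
  then obtain T where "a \<in> T" "open T" "T \<times> A \<subseteq> (\<lambda>z. fst z + snd z) -` U"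
    using Elementary_Topology.tube_lemma[OF assms(1) W] by blast
  then show ?thesis
    by (intro that) auto
qed

lemma translation_mono:
  fixes K :: "'a::ab_group_add set"
  assumes "B \<subseteq> (+) s ` K"
  shows "(+) a ` B \<subseteq> (+) (s + a) ` K"
  using image_mono[OF assms, of "(+) a"] by (simp only: translation_assoc)

lemma mem_translation_iff:
  fixes y :: "'a::ab_group_add"
  shows "x \<in> (+) (- y) ` A \<longleftrightarrow> x + y \<in> A"
  by (auto simp: image_iff eq_neg_iff_add_eq_0 add.commute[of x] intro: bexI[of _ "x + y"])

lemma sum_le_tvar:
  assumes "finite P" "disjoint P" "\<forall>B\<in>P. B \<in> sets borel \<and> B \<subseteq> A"
  shows "(\<Sum>B\<in>P. ennreal (cmod (\<mu> B))) \<le> tvar \<mu> A"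
  unfolding tvar_def by (rule SUP_upper) (use assms in auto)

lemma tvar_leI:
  assumes "\<And>P. finite P \<Longrightarrow> disjoint P \<Longrightarrow> \<forall>B\<in>P. B \<in> sets borel \<and> B \<subseteq> A \<Longrightarrow>
     (\<Sum>B\<in>P. ennreal (cmod (\<mu> B))) \<le> r"
  shows "tvar \<mu> A \<le> r"
  unfolding tvar_def by (rule SUP_least) (use assms in auto)

lemma norm_le_tvar:
  assumes "B \<in> sets borel" "B \<subseteq> A"
  shows "ennreal (cmod (\<mu> B)) \<le> tvar \<mu> A"
  using sum_le_tvar[of "{B}" A \<mu>] assms by auto

lemma tvar_mono:
  assumes "A \<subseteq> A'"
  shows "tvar \<mu> A \<le> tvar \<mu> A'"
  by (rule tvar_leI, rule sum_le_tvar) (use assms in auto)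

lemma tvar_cong:
  assumes "\<And>B. B \<in> sets borel \<Longrightarrow> B \<subseteq> A \<Longrightarrow> \<mu> B = \<mu>' B"
  shows "tvar \<mu> A = tvar \<mu>' A"
  unfolding tvar_def using assms by (intro SUP_cong refl sum.cong) auto

lemma tvar_triangle:
  assumes "\<And>B. cmod (\<mu> B) \<le> cmod (\<mu>1 B) + cmod (\<mu>2 B)"
  shows "tvar \<mu> A \<le> tvar \<mu>1 A + tvar \<mu>2 A"
proof (rule tvar_leI)
  fix P assume P: "finite P" "disjoint P" "\<forall>B\<in>P. B \<in> sets borel \<and> B \<subseteq> A"
  have "(\<Sum>B\<in>P. ennreal (cmod (\<mu> B))) \<le> (\<Sum>B\<in>P. ennreal (cmod (\<mu>1 B)) + ennreal (cmod (\<mu>2 B)))"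
    by (intro sum_mono) (metis assms ennreal_leI ennreal_plus norm_ge_zero)
  also have "\<dots> \<le> tvar \<mu>1 A + tvar \<mu>2 A"
    unfolding sum.distrib by (intro add_mono sum_le_tvar P)
  finally show "(\<Sum>B\<in>P. ennreal (cmod (\<mu> B))) \<le> tvar \<mu>1 A + tvar \<mu>2 A" .
qed

lemma tvar_translation_le:
  fixes A :: "'a::topological_ab_group_add set"
  shows "tvar (\<lambda>B. \<mu> ((+) a ` B)) A \<le> tvar \<mu> ((+) a ` A)"
proof (rule tvar_leI)
  fix P assume P: "finite P" "disjoint P" "\<forall>B\<in>P. B \<in> sets borel \<and> B \<subseteq> A"
  have inj: "inj_on ((`) ((+) a)) P"
    by (intro inj_onI) (simp add: inj_image_eq_iff)
  have "disjoint ((`) ((+) a) ` P)"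
  proof (rule pairwiseI)
    fix X Y assume "X \<in> (`) ((+) a) ` P" "Y \<in> (`) ((+) a) ` P" "X \<noteq> Y"
    then obtain X' Y' where "X' \<in> P" "Y' \<in> P" "X' \<noteq> Y'" and XY: "X = (+) a ` X'" "Y = (+) a ` Y'"
      by blast
    with P(2) have "X' \<inter> Y' = {}"
      by (auto simp: pairwise_def disjnt_def)
    then show "disjnt X Y"
      unfolding XY disjnt_def by auto
  qed
  then have "(\<Sum>C\<in>(`) ((+) a) ` P. ennreal (cmod (\<mu> C))) \<le> tvar \<mu> ((+) a ` A)"
    using P by (intro sum_le_tvar) (auto intro: borel_translation)
  then show "(\<Sum>B\<in>P. ennreal (cmod (\<mu> ((+) a ` B)))) \<le> tvar \<mu> ((+) a ` A)"
    by (simp only: sum.reindex[OF inj] comp_def)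
qed

lemma tvar_le_Knorm: "tvar \<mu> ((+) s ` K) \<le> Knorm K \<mu>"
  unfolding Knorm_def by (rule SUP_upper) simp

lemma norm_le_Knorm:
  assumes "B \<in> sets borel" "B \<subseteq> (+) s ` K"
  shows "ennreal (cmod (\<mu> B)) \<le> Knorm K \<mu>"
  using norm_le_tvar[OF assms] tvar_le_Knorm by (rule order.trans)

lemma Knorm_cong:
  assumes "\<And>B s. B \<in> sets borel \<Longrightarrow> B \<subseteq> (+) s ` K \<Longrightarrow> \<mu> B = \<mu>' B"
  shows "Knorm K \<mu> = Knorm K \<mu>'"
  unfolding Knorm_def by (rule SUP_cong[OF refl], rule tvar_cong) (rule assms)

lemma Knorm_translate_le:
  fixes \<mu> :: "'a::topological_ab_group_add set \<Rightarrow> complex"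
  shows "Knorm K (translate t \<mu>) \<le> Knorm K \<mu>"
  unfolding Knorm_def
proof (rule SUP_least)
  fix s
  have "tvar (translate t \<mu>) ((+) s ` K) \<le> tvar \<mu> ((+) (- t) ` (+) s ` K)"
    unfolding translate_def by (rule tvar_translation_le)
  also have "\<dots> \<le> (SUP s. tvar \<mu> ((+) s ` K))"
    unfolding translation_assoc by (rule SUP_upper) simp
  finally show "tvar (translate t \<mu>) ((+) s ` K) \<le> (SUP s. tvar \<mu> ((+) s ` K))" .
qed

lemma sum_norm_translation_le_Knorm:
  fixes K :: "'a::topological_ab_group_add set"
  assumes "finite P" "disjoint P" "\<forall>B\<in>P. B \<in> sets borel \<and> B \<subseteq> (+) s ` K"
  shows "ennreal (\<Sum>B\<in>P. cmod (\<mu> ((+) a ` B))) \<le> Knorm K \<mu>"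
proof -
  have "ennreal (\<Sum>B\<in>P. cmod (\<mu> ((+) a ` B))) \<le> tvar (\<lambda>B. \<mu> ((+) a ` B)) ((+) s ` K)"
    using sum_le_tvar[OF assms] by (simp add: sum_ennreal)
  also have "\<dots> \<le> tvar \<mu> ((+) a ` (+) s ` K)"
    by (rule tvar_translation_le)
  also have "\<dots> \<le> Knorm K \<mu>"
    unfolding translation_assoc by (rule tvar_le_Knorm)
  finally show ?thesis .
qed

lemma relatively_dense_mono:
  assumes "relatively_dense P" "P \<subseteq> P'"
  shows "relatively_dense P'"
proof -
  obtain C where "compact C" and cover: "{p + c |p c. p \<in> P \<and> c \<in> C} = UNIV"
    using assms(1) unfolding relatively_dense_def by blast
  have "{p + c |p c. p \<in> P \<and> c \<in> C} \<subseteq> {p + c |p c. p \<in> P' \<and> c \<in> C}"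
    using assms(2) by blast
  then have "{p + c |p c. p \<in> P' \<and> c \<in> C} = UNIV"
    unfolding cover by (simp add: top.extremum_unique)
  with \<open>compact C\<close> show ?thesis
    unfolding relatively_dense_def by blast
qed

lemma tvar_translation_le_almost_period:
  fixes K :: "'a::topological_ab_group_add set"
  shows "tvar \<mu> ((+) (p + c) ` K) \<le> Knorm K (\<lambda>A. translate p \<mu> A - \<mu> A) + tvar \<mu> ((+) c ` K)"
proof -
  have "tvar \<mu> ((+) (p + c) ` K) \<le>
      tvar (\<lambda>A. translate p \<mu> A - \<mu> A) ((+) (p + c) ` K) + tvar (\<lambda>B. \<mu> ((+) (- p) ` B)) ((+) (p + c) ` K)"
  proof (rule tvar_triangle)
    fix B
    have "\<mu> B = \<mu> ((+) (- p) ` B) - (translate p \<mu> B - \<mu> B)"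
      by (simp add: translate_def)
    then show "cmod (\<mu> B) \<le> cmod (translate p \<mu> B - \<mu> B) + cmod (\<mu> ((+) (- p) ` B))"
      by (metis add.commute norm_triangle_ineq4)
  qed
  also have "\<dots> \<le> Knorm K (\<lambda>A. translate p \<mu> A - \<mu> A) + tvar \<mu> ((+) c ` K)"
  proof (rule add_mono)
    show "tvar (\<lambda>A. translate p \<mu> A - \<mu> A) ((+) (p + c) ` K) \<le> Knorm K (\<lambda>A. translate p \<mu> A - \<mu> A)"
      by (rule tvar_le_Knorm)
    have "tvar (\<lambda>B. \<mu> ((+) (- p) ` B)) ((+) (p + c) ` K) \<le> tvar \<mu> ((+) (- p) ` (+) (p + c) ` K)"
      by (rule tvar_translation_le)
    also have "(+) (- p) ` (+) (p + c) ` K = (+) c ` K"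
      unfolding translation_assoc by simp
    finally show "tvar (\<lambda>B. \<mu> ((+) (- p) ` B)) ((+) (p + c) ` K) \<le> tvar \<mu> ((+) c ` K)" .
  qed
  finally show ?thesis .
qed

lemma Knorm_less_top:
  fixes K :: "'a::{topological_ab_group_add,t2_space} set"
  assumes K: "compact K" and nap: "norm_almost_periodic K \<mu>"
    and fin: "\<And>A. compact A \<Longrightarrow> tvar \<mu> A < \<infinity>"
  shows "Knorm K \<mu> < \<infinity>"
proof -
  have "relatively_dense {t. Knorm K (\<lambda>A. translate t \<mu> A - \<mu> A) < ennreal 1}"
    using nap[unfolded norm_almost_periodic_def, rule_format, of 1] by simp
  then obtain C where C: "compact C"
    and cov: "{p + c | p c. p \<in> {t. Knorm K (\<lambda>A. translate t \<mu> A - \<mu> A) < 1} \<and> c \<in> C} = UNIV"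
    unfolding relatively_dense_def by auto
  define CK where "CK = (\<lambda>z. fst z + snd z) ` (C \<times> K)"
  have "compact CK"
    unfolding CK_def by (intro compact_continuous_image compact_Times C K continuous_intros)
  have "tvar \<mu> ((+) s ` K) \<le> 1 + tvar \<mu> CK" for s
  proof -
    obtain p c where s: "s = p + c" and p: "Knorm K (\<lambda>A. translate p \<mu> A - \<mu> A) < 1"
      and "c \<in> C"
      using cov by blast
    have "(+) c ` K \<subseteq> CK"
      unfolding CK_def using \<open>c \<in> C\<close> by force
    then have c: "tvar \<mu> ((+) c ` K) \<le> tvar \<mu> CK"
      by (rule tvar_mono)
    have "tvar \<mu> ((+) s ` K) \<le> Knorm K (\<lambda>A. translate p \<mu> A - \<mu> A) + tvar \<mu> ((+) c ` K)"
      unfolding s by (rule tvar_translation_le_almost_period)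
    also have "\<dots> \<le> 1 + tvar \<mu> CK"
      by (rule add_mono[OF less_imp_le[OF p] c])
    finally show ?thesis .
  qed
  then have "Knorm K \<mu> \<le> 1 + tvar \<mu> CK"
    unfolding Knorm_def by (intro SUP_least)
  also have "\<dots> < \<infinity>"
    using fin[OF \<open>compact CK\<close>] by (simp add: less_top ennreal_add_eq_top)
  finally show ?thesis .
qed

section \<open>Radon measures and set integrals over translates\<close>

lemma set_integrable_norm_le_1:
  fixes f :: "'a \<Rightarrow> 'b::{banach, second_countable_topology}"
  assumes "S \<in> sets M" "emeasure M S < \<infinity>" "f \<in> borel_measurable M" "\<And>x. norm (f x) \<le> 1"
  shows "set_integrable M S f"
proof (rule set_integrable_bound[where f="\<lambda>_. 1::real"])
  show "set_integrable M S (\<lambda>_. 1::real)"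
    using assms(1,2) by (simp add: set_integrable_def integrable_indicator_iff)
  show "set_borel_measurable M S f"
    using assms(1,3) unfolding set_borel_measurable_def by measurable
  show "AE x in M. x \<in> S \<longrightarrow> norm (f x) \<le> norm (1::real)"
    using assms(4) by simp
qed

lemma set_integral_Diff_split:
  fixes f :: "'a \<Rightarrow> 'b::{banach, second_countable_topology}"
  assumes "set_integrable M U f" "U \<in> sets M" "A \<in> sets M" "A \<subseteq> U"
  shows "(LINT x:U|M. f x) = (LINT x:A|M. f x) + (LINT x:U - A|M. f x)"
proof -
  have "U = A \<union> (U - A)"
    using assms(4) by blast
  then show ?thesis
    using assms by (metis Diff_disjoint Diff_subset sets.Diff set_integrable_subset set_integral_Un)
qed

lemma set_integral_le_add_measure_diff:
  fixes f :: "'a \<Rightarrow> real"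
  assumes f: "f \<in> borel_measurable M" "\<And>x. 0 \<le> f x" "\<And>x. f x \<le> 1"
    and U: "U \<in> sets M" "emeasure M U < \<infinity>"
    and S: "S \<in> sets M" "S \<subseteq> U" and A: "A \<in> sets M" "A \<subseteq> U"
  shows "(LINT x:S|M. f x) \<le> (LINT x:A|M. f x) + measure M (U - A)"
proof -
  have U_int: "set_integrable M U f"
    using U f by (intro set_integrable_norm_le_1) auto
  have UA: "U - A \<in> sets M" "emeasure M (U - A) < \<infinity>"
    using U A emeasure_mono[of "U - A" U M] by (auto intro: le_less_trans)
  have "(LINT x:S|M. f x) \<le> (LINT x:S|M. f x) + (LINT x:U - S|M. f x)"
    using f(2) unfolding set_lebesgue_integral_def by (simp add: Bochner_Integration.integral_nonneg)
  also have "\<dots> = (LINT x:U|M. f x)"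
    using set_integral_Diff_split[OF U_int U(1) S] by simp
  also have "\<dots> = (LINT x:A|M. f x) + (LINT x:U - A|M. f x)"
    by (rule set_integral_Diff_split[OF U_int U(1) A])
  also have "(LINT x:U - A|M. f x) \<le> (LINT x:U - A|M. 1)"
    using UA f by (intro set_integral_mono set_integrable_norm_le_1) auto
  also have "\<dots> = measure M (U - A)"
    using UA by (simp add: set_integral_const)
  finally show ?thesis
    by simp
qed

lemma set_integral_Re_Im:
  fixes h :: "'a \<Rightarrow> complex"
  assumes "set_integrable M S h"
  shows "Re (LINT x:S|M. h x) = (LINT x:S|M. Re (h x))" "Im (LINT x:S|M. h x) = (LINT x:S|M. Im (h x))"
  using assms unfolding set_integrable_def set_lebesgue_integral_def
  by (simp_all add: integral_Re[symmetric] integral_Im[symmetric] del: integral_Re integral_Im)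

lemma sets_radon_measure: "radon_measure M \<Longrightarrow> sets M = sets borel"
  unfolding radon_measure_def by simp

lemma emeasure_compact_less_top: "radon_measure M \<Longrightarrow> compact K \<Longrightarrow> emeasure M K < \<infinity>"
  unfolding radon_measure_def by simp

lemma radon_measure_outer_approx:
  fixes A :: "'a::t2_space set"
  assumes M: "radon_measure M" and A: "compact A" and e: "e > 0"
  obtains U where "open U" "A \<subseteq> U" "emeasure M U < \<infinity>" "measure M (U - A) < e"
proof -
  have A_borel: "A \<in> sets borel" and A_fin: "emeasure M A < \<infinity>"
    using borel_compact[OF A] emeasure_compact_less_top[OF M A] by auto
  have A_eq: "emeasure M A = ennreal (measure M A)"
    using A_fin by (simp add: emeasure_eq_ennreal_measure)
  have outer: "emeasure M A = (INF U\<in>{U. open U \<and> A \<subseteq> U}. emeasure M U)"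
    using M A_borel unfolding radon_measure_def by blast
  have "(INF U\<in>{U. open U \<and> A \<subseteq> U}. emeasure M U) < ennreal (measure M A + e)"
    unfolding outer[symmetric] A_eq using e by (simp add: ennreal_lessI add_nonneg_pos)
  then obtain U where U: "open U" "A \<subseteq> U" "emeasure M U < ennreal (measure M A + e)"
    by (auto simp: INF_less_iff)
  have U_fin: "emeasure M U < \<infinity>"
    using U(3) by (rule order.strict_trans) simp
  have "emeasure M U = ennreal (measure M U)"
    using U_fin by (simp add: emeasure_eq_ennreal_measure)
  then have "ennreal (measure M U) < ennreal (measure M A + e)"
    using U(3) by (simp del: ennreal_plus)
  then have "measure M U < measure M A + e"
    by (simp add: ennreal_less_iff del: ennreal_plus)
  moreover have "measure M (U - A) = measure M U - measure M A"
    using U U_fin A_borel sets_radon_measure[OF M] by (intro measure_Diff) auto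
  ultimately show ?thesis
    using that U U_fin by simp
qed

lemma set_integrable_translation:
  fixes M :: "'a::{topological_ab_group_add,t2_space} measure"
    and h :: "'a \<Rightarrow> 'b::{banach, second_countable_topology}"
  assumes M: "radon_measure M" and h: "h \<in> borel_measurable borel" "\<And>x. norm (h x) \<le> 1"
    and L: "compact L" and B: "B \<in> sets borel" "B \<subseteq> L"
  shows "set_integrable M ((+) a ` B) h"
proof (rule set_integrable_norm_le_1)
  show "(+) a ` B \<in> sets M"
    unfolding sets_radon_measure[OF M] by (rule borel_translation[OF B(1)])
  have "emeasure M ((+) a ` B) \<le> emeasure M ((+) a ` L)"
    by (rule emeasure_mono[OF image_mono[OF B(2)]])
      (unfold sets_radon_measure[OF M], rule borel_compact[OF compact_group_translation[OF L]])
  also have "\<dots> < \<infinity>"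
    by (rule emeasure_compact_less_top[OF M compact_group_translation[OF L]])
  finally show "emeasure M ((+) a ` B) < \<infinity>" .
  show "h \<in> borel_measurable M"
    using h(1) by (simp add: measurable_cong_sets[OF sets_radon_measure[OF M] refl])
qed (rule h(2))

text \<open>Upper semicontinuity: by outer regularity A - y0 has an open neighbourhood U of small excess
  measure, and the tube lemma keeps A - y inside U for y near y0.\<close>
lemma open_set_integral_translation_less:
  fixes M :: "'a::{topological_ab_group_add,t2_space} measure" and f :: "'a \<Rightarrow> real"
  assumes M: "radon_measure M" and f: "f \<in> borel_measurable borel" "\<And>x. 0 \<le> f x" "\<And>x. f x \<le> 1"
    and A: "compact A"
  shows "open {y. (LINT x:(+) (- y) ` A|M. f x) < c}"
proof (rule Topological_Spaces.openI)
  let ?\<Phi> = "\<lambda>y. LINT x:(+) (- y) ` A|M. f x"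
  have sM: "sets M = sets borel"
    using M by (rule sets_radon_measure)
  have fM: "f \<in> borel_measurable M"
    using f(1) by (simp add: measurable_cong_sets[OF sM refl])
  fix y0 assume "y0 \<in> {y. ?\<Phi> y < c}"
  define A0 where "A0 = (+) (- y0) ` A"
  have "compact A0"
    unfolding A0_def using A by (rule compact_group_translation)
  have "c - ?\<Phi> y0 > 0"
    using \<open>y0 \<in> _\<close> by simp
  then obtain U where U: "open U" "A0 \<subseteq> U" "emeasure M U < \<infinity>" "measure M (U - A0) < c - ?\<Phi> y0"
    by (rule radon_measure_outer_approx[OF M \<open>compact A0\<close>])
  obtain T where T: "open T" "- y0 \<in> T" "\<And>b. b \<in> T \<Longrightarrow> (+) b ` A \<subseteq> U"
    using compact_translation_nhd[OF A \<open>open U\<close>, of "- y0"] U(2) unfolding A0_def by blast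
  have "U \<in> sets M"
    using U(1) sM by simp
  have A0_borel: "A0 \<in> sets M"
    using \<open>compact A0\<close> sM by (simp add: borel_compact)
  have "?\<Phi> y < c" if "- y \<in> T" for y
  proof -
    have Ay: "(+) (- y) ` A \<in> sets M" "(+) (- y) ` A \<subseteq> U"
      unfolding sM by (rule borel_compact[OF compact_group_translation[OF A]], rule T(3)[OF that])
    have "?\<Phi> y \<le> (LINT x:A0|M. f x) + measure M (U - A0)"
      by (rule set_integral_le_add_measure_diff[OF fM f(2,3) \<open>U \<in> sets M\<close> U(3) Ay A0_borel U(2)])
    then show ?thesis
      using U(4) unfolding A0_def by simp
  qed
  moreover have "open (uminus -` T)"
    by (rule continuous_open_vimage[OF T(1)]) (intro continuous_intros)
  ultimately show "\<exists>T. open T \<and> y0 \<in> T \<and> T \<subseteq> {y. ?\<Phi> y < c}"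
    using T(2) by (intro exI[of _ "uminus -` T"]) auto
qed

lemma borel_measurable_set_integral_translation_compact_real:
  fixes M :: "'a::{topological_ab_group_add,t2_space} measure" and f :: "'a \<Rightarrow> real"
  assumes M: "radon_measure M" and f: "f \<in> borel_measurable borel" "\<And>x. \<bar>f x\<bar> \<le> 1"
    and A: "compact A"
  shows "(\<lambda>y. LINT x:(+) (- y) ` A|M. f x) \<in> borel_measurable borel"
proof -
  \<comment> \<open>s = 1 and s = -1 give the positive and the negative part of f.\<close>
  have part_meas: "(\<lambda>x. max (s * f x) 0) \<in> borel_measurable borel" for s
    using f(1) by measurable
  have part_bounds: "0 \<le> max (s * f x) 0" "max (s * f x) 0 \<le> 1" if "\<bar>s\<bar> = 1" for s x
    using f(2)[of x] that abs_ge_self[of "s * f x"] by (auto simp: abs_mult)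
  have int: "set_integrable M ((+) (- y) ` A) (\<lambda>x. max (s * f x) 0)" if "\<bar>s\<bar> = 1" for s y
    by (rule set_integrable_translation[OF M part_meas _ A borel_compact[OF A] order.refl])
      (use part_bounds[OF that] in auto)
  have part_Phi: "(\<lambda>y. LINT x:(+) (- y) ` A|M. max (s * f x) 0) \<in> borel_measurable borel"
    if "\<bar>s\<bar> = 1" for s
    using open_set_integral_translation_less[OF M part_meas part_bounds[OF that] A]
    unfolding borel_measurable_iff_less by (simp add: borel_open)
  have parts: "max (f x) 0 - max (- f x) 0 = f x" for x
    by (simp add: max_def)
  have "(LINT x:(+) (- y) ` A|M. f x) =
      (LINT x:(+) (- y) ` A|M. max (1 * f x) 0) - (LINT x:(+) (- y) ` A|M. max (-1 * f x) 0)" for y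
    using set_integral_diff(2)[OF int[of 1 y] int[of "-1" y]] by (simp add: parts)
  then show ?thesis
    using borel_measurable_diff[OF part_Phi[of 1] part_Phi[of "-1"]] by simp
qed

lemma borel_measurable_set_integral_translation_compact:
  fixes M :: "'a::{topological_ab_group_add,t2_space} measure" and h :: "'a \<Rightarrow> complex"
  assumes M: "radon_measure M" and h: "h \<in> borel_measurable borel" "\<And>x. cmod (h x) \<le> 1"
    and A: "compact A"
  shows "(\<lambda>y. LINT x:(+) (- y) ` A|M. h x) \<in> borel_measurable borel"
proof -
  have Re_Im: "Re (LINT x:(+) (- y) ` A|M. h x) = (LINT x:(+) (- y) ` A|M. Re (h x))"
    "Im (LINT x:(+) (- y) ` A|M. h x) = (LINT x:(+) (- y) ` A|M. Im (h x))" for y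
    by (rule set_integral_Re_Im[OF set_integrable_translation[OF M h A borel_compact[OF A] order.refl]])+
  have "\<bar>Re (h x)\<bar> \<le> 1" "\<bar>Im (h x)\<bar> \<le> 1" for x
    using abs_Re_le_cmod[of "h x"] abs_Im_le_cmod[of "h x"] h(2)[of x] by simp_all
  then show ?thesis
    unfolding borel_measurable_complex_iff Re_Im using h(1)
    by (intro conjI borel_measurable_set_integral_translation_compact_real[OF M _ _ A]) auto
qed

lemma sigma_sets_compact_subsets:
  fixes L :: "'a::t2_space set"
  assumes L: "compact L"
  shows "sigma_sets L {C. compact C \<and> C \<subseteq> L} = {A \<in> sets borel. A \<subseteq> L}"
proof (intro equalityI subsetI)
  fix A assume "A \<in> sigma_sets L {C. compact C \<and> C \<subseteq> L}"
  then show "A \<in> {A \<in> sets borel. A \<subseteq> L}"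
    by induction (use borel_compact[OF L] in \<open>auto intro: borel_compact\<close>)
next
  fix A assume A: "A \<in> {A \<in> sets borel. A \<subseteq> L}"
  have "(\<inter>) L ` sigma_sets UNIV {S. open S} = sigma_sets L ((\<inter>) L ` {S. open S})"
    using borel_compact[OF L] by (intro sigma_sets_Int) (auto simp: sets_borel)
  moreover have "A = L \<inter> A" "A \<in> sigma_sets UNIV {S. open S}"
    using A by (auto simp: sets_borel)
  ultimately have "A \<in> sigma_sets L ((\<inter>) L ` {S. open S})"
    by blast
  also have "\<dots> \<subseteq> sigma_sets L {C. compact C \<and> C \<subseteq> L}"
  proof (rule sigma_sets_mono, rule subsetI)
    fix X assume "X \<in> (\<inter>) L ` {S. open S}"
    then obtain U where "open U" "X = L - (L - U)"
      by blast
    moreover have "L - U \<in> sigma_sets L {C. compact C \<and> C \<subseteq> L}"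
      using compact_diff[OF L \<open>open U\<close>] by (intro sigma_sets.Basic) auto
    ultimately show "X \<in> sigma_sets L {C. compact C \<and> C \<subseteq> L}"
      by (auto intro: sigma_sets.Compl)
  qed
  finally show "A \<in> sigma_sets L {C. compact C \<and> C \<subseteq> L}" .
qed

lemma set_integral_translation_Diff:
  fixes M :: "'a::{topological_ab_group_add,t2_space} measure"
    and h :: "'a \<Rightarrow> 'b::{banach, second_countable_topology}"
  assumes M: "radon_measure M" and h: "h \<in> borel_measurable borel" "\<And>x. norm (h x) \<le> 1"
    and L: "compact L" and A: "A \<in> sets borel" "A \<subseteq> L"
  shows "(LINT x:(+) a ` (L - A)|M. h x) = (LINT x:(+) a ` L|M. h x) - (LINT x:(+) a ` A|M. h x)"
proof -
  have "(+) a ` L \<in> sets M" "(+) a ` A \<in> sets M"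
    unfolding sets_radon_measure[OF M]
    by (rule borel_translation[OF borel_compact[OF L]], rule borel_translation[OF A(1)])
  then show ?thesis
    using set_integral_Diff_split[OF set_integrable_translation[OF M h L borel_compact[OF L] order.refl]
        _ _ image_mono[OF A(2)]]
    unfolding translation_diff by (simp add: eq_diff_eq)
qed

lemma set_integral_translation_UN:
  fixes M :: "'a::{topological_ab_group_add,t2_space} measure"
    and h :: "'a \<Rightarrow> 'b::{banach, second_countable_topology}"
  assumes M: "radon_measure M" and h: "h \<in> borel_measurable borel" "\<And>x. norm (h x) \<le> 1"
    and L: "compact L" and A: "\<And>i. A i \<in> sets borel" "\<And>i. A i \<subseteq> L" "disjoint_family A"
  shows "(LINT x:(+) a ` (\<Union>i. A i)|M. h x) = (\<Sum>i. LINT x:(+) a ` A i|M. h x)"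
proof -
  have "(\<Union>i. A i) \<in> sets borel" "(\<Union>i. A i) \<subseteq> L"
    using A by auto
  then have "set_integrable M (\<Union>i. (+) a ` A i) h"
    unfolding image_UN[symmetric] by (rule set_integrable_translation[OF M h L])
  moreover have "(+) a ` A i \<inter> (+) a ` A j = {}" if "i \<noteq> j" for i j
    using A(3) that by (auto simp: disjoint_family_on_def disjoint_iff)
  moreover have "(+) a ` A i \<in> sets M" for i
    unfolding sets_radon_measure[OF M] by (rule borel_translation[OF A(1)])
  ultimately show ?thesis
    unfolding image_UN by (intro lebesgue_integral_countable_add)
qed

lemma borel_measurable_set_integral_translation:
  fixes M :: "'a::{topological_ab_group_add,t2_space} measure" and h :: "'a \<Rightarrow> complex"
  assumes M: "radon_measure M" and h: "h \<in> borel_measurable borel" "\<And>x. cmod (h x) \<le> 1"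
    and L: "compact L" and A: "A \<in> sets borel" "A \<subseteq> L"
  shows "(\<lambda>y. LINT x:(+) (- y) ` A|M. h x) \<in> borel_measurable borel"
proof -
  have "Int_stable {C. compact C \<and> C \<subseteq> L}"
    unfolding Int_stable_def by (auto intro!: compact_Int)
  moreover have "{C. compact C \<and> C \<subseteq> L} \<subseteq> Pow L"
    by auto
  moreover have "A \<in> sigma_sets L {C. compact C \<and> C \<subseteq> L}"
    using A by (simp add: sigma_sets_compact_subsets[OF L])
  ultimately show ?thesis
  proof (induction rule: sigma_sets_induct_disjoint)
    case (basic A)
    then show ?case
      using borel_measurable_set_integral_translation_compact[OF M h] by simp
  next
    case empty
    then show ?case
      by simp
  next
    case (compl A)
    then have A: "A \<in> sets borel" "A \<subseteq> L"
      by (simp_all add: sigma_sets_compact_subsets[OF L])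
    show ?case
      unfolding set_integral_translation_Diff[OF M h L A]
      by (intro borel_measurable_diff borel_measurable_set_integral_translation_compact[OF M h L] compl.IH)
  next
    case (union A)
    then have A: "A i \<in> sets borel" "A i \<subseteq> L" for i
      by (auto simp: sigma_sets_compact_subsets[OF L])
    show ?case
      unfolding set_integral_translation_UN[OF M h L A union.hyps(1)]
      by (intro borel_measurable_suminf union.IH)
  qed
qed

lemma norm_cmeas_le_measure:
  assumes "\<And>x. cmod (h x) = 1" "sets M = sets borel"
  shows "cmod (cmeas M h B) \<le> measure M B"
proof -
  have "cmod (cmeas M h B) \<le> (\<integral>x. norm (indicator B x *\<^sub>R h x) \<partial>M)"
    unfolding cmeas_def set_lebesgue_integral_def by (rule integral_norm_bound)
  also have "\<dots> = (\<integral>x. indicator B x \<partial>M)"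
    using assms(1) by (simp add: indicator_def)
  also have "\<dots> = measure M B"
    using sets_eq_imp_space_eq[OF assms(2)] by simp
  finally show ?thesis .
qed

lemma tvar_cmeas_le_emeasure:
  assumes "\<And>x. cmod (h x) = 1" "sets M = sets borel" "A \<in> sets borel"
  shows "tvar (cmeas M h) A \<le> emeasure M A"
proof (rule tvar_leI)
  fix P assume P: "finite P" "disjoint P" "\<forall>B\<in>P. B \<in> sets borel \<and> B \<subseteq> A"
  have "(\<Sum>B\<in>P. ennreal (cmod (cmeas M h B))) \<le> (\<Sum>B\<in>P. emeasure M B)"
  proof (rule sum_mono)
    fix B
    have "ennreal (cmod (cmeas M h B)) \<le> ennreal (measure M B)"
      using norm_cmeas_le_measure[OF assms(1,2)] by (rule ennreal_leI)
    also have "\<dots> \<le> emeasure M B"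
      by (cases "emeasure M B = \<infinity>") (simp_all add: emeasure_eq_ennreal_measure)
    finally show "ennreal (cmod (cmeas M h B)) \<le> emeasure M B" .
  qed
  also have "\<dots> = emeasure M (\<Union>B\<in>P. B)"
  proof (rule sum_emeasure)
    show "(\<lambda>B. B) ` P \<subseteq> sets M"
      using P(3) assms(2) by auto
    show "disjoint_family_on (\<lambda>B. B) P"
      using P(2) unfolding disjoint_family_on_def pairwise_def disjnt_def by blast
  qed (rule P(1))
  also have "\<dots> \<le> emeasure M A"
    using P(3) assms(2,3) by (intro emeasure_mono) auto
  finally show "(\<Sum>B\<in>P. ennreal (cmod (cmeas M h B))) \<le> emeasure M A" .
qed

lemma Knorm_cmeas_less_top:
  fixes M :: "'a::{topological_ab_group_add,t2_space} measure"
  assumes "complex_radon M h" "compact K" "norm_almost_periodic K (cmeas M h)"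
  shows "Knorm K (cmeas M h) < \<infinity>"
proof (rule Knorm_less_top[OF assms(2,3)])
  fix A :: "'a set" assume "compact A"
  have M: "radon_measure M" and h: "\<And>x. cmod (h x) = 1"
    using assms(1) unfolding complex_radon_def by auto
  have "tvar (cmeas M h) A \<le> emeasure M A"
    by (rule tvar_cmeas_le_emeasure[OF h sets_radon_measure[OF M] borel_compact[OF \<open>compact A\<close>]])
  also have "\<dots> < \<infinity>"
    using M \<open>compact A\<close> by (rule emeasure_compact_less_top)
  finally show "tvar (cmeas M h) A < \<infinity>" .
qed

section \<open>Convolution of a set function with a finite measure\<close>

definition conv_setfun ::
    "('a::group_add set \<Rightarrow> complex) \<Rightarrow> 'a measure \<Rightarrow> ('a \<Rightarrow> complex) \<Rightarrow> 'a set \<Rightarrow> complex" where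
  "conv_setfun \<mu> N g B = (\<integral>y. \<mu> ((+) (- y) ` B) * g y \<partial>N)"

definition measurable_translates ::
    "'a::topological_ab_group_add set \<Rightarrow> 'a measure \<Rightarrow> ('a set \<Rightarrow> complex) \<Rightarrow> bool" where
  "measurable_translates K N \<mu> \<longleftrightarrow>
    (\<forall>B s. B \<in> sets borel \<and> B \<subseteq> (+) s ` K \<longrightarrow> (\<lambda>y. \<mu> ((+) (- y) ` B)) \<in> borel_measurable N)"

lemma measurable_translatesI:
  assumes "\<And>B s. B \<in> sets borel \<Longrightarrow> B \<subseteq> (+) s ` K \<Longrightarrow> (\<lambda>y. \<mu> ((+) (- y) ` B)) \<in> borel_measurable N"
  shows "measurable_translates K N \<mu>"
  using assms unfolding measurable_translates_def by blast

lemma measurable_translatesD: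
  assumes "measurable_translates K N \<mu>" "B \<in> sets borel" "B \<subseteq> (+) s ` K"
  shows "(\<lambda>y. \<mu> ((+) (- y) ` B)) \<in> borel_measurable N"
  using assms unfolding measurable_translates_def by blast

lemma measurable_translates_translate:
  assumes "measurable_translates K N \<mu>"
  shows "measurable_translates K N (translate t \<mu>)"
proof (rule measurable_translatesI)
  fix B s assume B: "B \<in> sets borel" "B \<subseteq> (+) s ` K"
  have "(\<lambda>y. \<mu> ((+) (- y) ` (+) (- t) ` B)) \<in> borel_measurable N"
    by (rule measurable_translatesD[OF assms borel_translation[OF B(1)] translation_mono[OF B(2)]])
  then show "(\<lambda>y. translate t \<mu> ((+) (- y) ` B)) \<in> borel_measurable N"
    unfolding translate_def translation_assoc by (simp add: add.commute)
qed

lemma measurable_translates_diff: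
  assumes "measurable_translates K N \<mu>1" "measurable_translates K N \<mu>2"
  shows "measurable_translates K N (\<lambda>A. \<mu>1 A - \<mu>2 A)"
  using assms by (intro measurable_translatesI borel_measurable_diff) (auto dest: measurable_translatesD)

lemma conv_meas_eq_conv_setfun:
  fixes h :: "'a::ab_group_add \<Rightarrow> complex"
  shows "conv_meas M h N g = conv_setfun (cmeas M h) N g"
proof -
  have translate_indicator:
    "indicator A (x + y) * h x = indicator ((+) (- y) ` A) x *\<^sub>R h x" for A and x y :: 'a
    unfolding indicator_def of_bool_def mem_translation_iff by simp
  show ?thesis
    unfolding conv_meas_def[abs_def] conv_setfun_def[abs_def] cmeas_def set_lebesgue_integral_def
      translate_indicator ..
qed

lemma translate_conv_setfun:
  fixes \<mu> :: "'a::ab_group_add set \<Rightarrow> complex"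
  shows "translate t (conv_setfun \<mu> N g) = conv_setfun (translate t \<mu>) N g"
  unfolding translate_def conv_setfun_def translation_assoc by (simp add: add.commute)

lemma conv_setfun_diff:
  assumes "integrable N (\<lambda>y. \<mu>1 ((+) (- y) ` B) * g y)" "integrable N (\<lambda>y. \<mu>2 ((+) (- y) ` B) * g y)"
  shows "conv_setfun (\<lambda>A. \<mu>1 A - \<mu>2 A) N g B = conv_setfun \<mu>1 N g B - conv_setfun \<mu>2 N g B"
  unfolding conv_setfun_def using assms by (simp add: left_diff_distrib)

lemma integrable_conv_setfun:
  fixes \<mu> :: "'a::topological_ab_group_add set \<Rightarrow> complex"
  assumes N: "finite_measure N" and g: "g \<in> borel_measurable N" "\<And>y. cmod (g y) \<le> 1"
    and meas: "measurable_translates K N \<mu>" and fin: "Knorm K \<mu> < \<infinity>"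
    and B: "B \<in> sets borel" "B \<subseteq> (+) s ` K"
  shows "integrable N (\<lambda>y. \<mu> ((+) (- y) ` B) * g y)"
proof -
  obtain Q where Q: "Knorm K \<mu> = ennreal Q" "0 \<le> Q"
    using fin by (cases "Knorm K \<mu>") auto
  have bound: "cmod (\<mu> ((+) (- y) ` B)) \<le> Q" for y
  proof -
    have "ennreal (cmod (\<mu> ((+) (- y) ` B))) \<le> Knorm K \<mu>"
      using translation_mono[OF B(2)] borel_translation[OF B(1)] by (rule norm_le_Knorm[rotated])
    then show ?thesis
      using Q by (simp add: ennreal_le_iff)
  qed
  have "cmod (\<mu> ((+) (- y) ` B) * g y) \<le> Q" for y
    using mult_mono[OF bound g(2) Q(2) norm_ge_zero] by (simp add: norm_mult)
  then show ?thesis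
    using measurable_translatesD[OF meas B] g(1)
    by (intro finite_measure.integrable_const_bound[OF N, where B=Q]) auto
qed

lemma Knorm_conv_setfun_le:
  fixes \<mu> :: "'a::topological_ab_group_add set \<Rightarrow> complex"
  assumes N: "finite_measure N" and g: "g \<in> borel_measurable N" "\<And>y. cmod (g y) \<le> 1"
    and meas: "measurable_translates K N \<mu>" and r: "Knorm K \<mu> \<le> ennreal r" "0 \<le> r"
  shows "Knorm K (conv_setfun \<mu> N g) \<le> ennreal (r * measure N (space N))"
  unfolding Knorm_def
proof (rule SUP_least, rule tvar_leI)
  fix s and P :: "'a set set"
  assume P: "finite P" "disjoint P" "\<forall>B\<in>P. B \<in> sets borel \<and> B \<subseteq> (+) s ` K"
  let ?F = "\<lambda>B y. \<mu> ((+) (- y) ` B) * g y"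
  have fin: "Knorm K \<mu> < \<infinity>"
    using r(1) by (rule le_less_trans) simp
  have int: "integrable N (?F B)" if "B \<in> P" for B
    using P(3) that by (intro integrable_conv_setfun[OF N g meas fin]) auto
  have bound: "(\<Sum>B\<in>P. norm (?F B y)) \<le> r" for y
  proof -
    have "(\<Sum>B\<in>P. cmod (\<mu> ((+) (- y) ` B))) \<le> r"
      using order.trans[OF sum_norm_translation_le_Knorm[OF P, where a="- y"] r(1)] r(2)
      by (simp add: ennreal_le_iff)
    moreover have "norm (?F B y) \<le> cmod (\<mu> ((+) (- y) ` B))" for B
      using mult_left_le[OF g(2) norm_ge_zero] by (simp add: norm_mult)
    ultimately show ?thesis
      by (meson order.trans sum_mono)
  qed
  have "(\<Sum>B\<in>P. cmod (conv_setfun \<mu> N g B)) \<le> (\<Sum>B\<in>P. \<integral>y. norm (?F B y) \<partial>N)"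
    unfolding conv_setfun_def by (intro sum_mono integral_norm_bound)
  also have "\<dots> = (\<integral>y. (\<Sum>B\<in>P. norm (?F B y)) \<partial>N)"
    by (rule Bochner_Integration.integral_sum[symmetric]) (erule int[THEN integrable_norm])
  also have "\<dots> \<le> (\<integral>y. r \<partial>N)"
  proof (rule integral_mono)
    show "integrable N (\<lambda>y. \<Sum>B\<in>P. norm (?F B y))"
      by (rule Bochner_Integration.integrable_sum) (erule int[THEN integrable_norm])
    show "integrable N (\<lambda>y. r)"
      by (rule finite_measure.integrable_const[OF N])
  qed (rule bound)
  also have "\<dots> = r * measure N (space N)"
    by (simp add: mult.commute)
  finally show "(\<Sum>B\<in>P. ennreal (cmod (conv_setfun \<mu> N g B))) \<le> ennreal (r * measure N (space N))"
    by (simp add: sum_ennreal ennreal_leI)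
qed

lemma Knorm_translate_conv_setfun_diff_le:
  fixes \<mu> :: "'a::topological_ab_group_add set \<Rightarrow> complex"
  assumes N: "finite_measure N" and g: "g \<in> borel_measurable N" "\<And>y. cmod (g y) \<le> 1"
    and meas: "measurable_translates K N \<mu>" and fin: "Knorm K \<mu> < \<infinity>"
    and r: "Knorm K (\<lambda>A. translate t \<mu> A - \<mu> A) \<le> ennreal r" "0 \<le> r"
  shows "Knorm K (\<lambda>A. translate t (conv_setfun \<mu> N g) A - conv_setfun \<mu> N g A)
    \<le> ennreal (r * measure N (space N))"
proof -
  have meas_t: "measurable_translates K N (translate t \<mu>)"
    by (rule measurable_translates_translate[OF meas])
  have fin_t: "Knorm K (translate t \<mu>) < \<infinity>"
    using Knorm_translate_le fin by (rule le_less_trans)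
  have "Knorm K (\<lambda>A. translate t (conv_setfun \<mu> N g) A - conv_setfun \<mu> N g A) =
      Knorm K (conv_setfun (\<lambda>A. translate t \<mu> A - \<mu> A) N g)"
  proof (rule Knorm_cong)
    fix B s assume B: "B \<in> sets borel" "B \<subseteq> (+) s ` K"
    show "translate t (conv_setfun \<mu> N g) B - conv_setfun \<mu> N g B =
        conv_setfun (\<lambda>A. translate t \<mu> A - \<mu> A) N g B"
      unfolding translate_conv_setfun
      by (intro conv_setfun_diff[symmetric] integrable_conv_setfun[OF N g _ _ B] meas meas_t fin fin_t)
  qed
  also have "\<dots> \<le> ennreal (r * measure N (space N))"
    by (intro Knorm_conv_setfun_le[OF N g _ r] measurable_translates_diff meas meas_t)
  finally show ?thesis .
qed

lemma norm_almost_periodic_conv_setfun: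
  fixes \<mu> :: "'a::topological_ab_group_add set \<Rightarrow> complex"
  assumes N: "finite_measure N" and g: "g \<in> borel_measurable N" "\<And>y. cmod (g y) \<le> 1"
    and meas: "measurable_translates K N \<mu>" and fin: "Knorm K \<mu> < \<infinity>"
    and nap: "norm_almost_periodic K \<mu>"
  shows "norm_almost_periodic K (conv_setfun \<mu> N g)"
  unfolding norm_almost_periodic_def
proof (intro allI impI)
  fix \<epsilon> :: real assume "\<epsilon> > 0"
  define c where "c = measure N (space N) + 1"
  have "c > 0"
    unfolding c_def by (simp add: add_nonneg_pos)
  have almost_period:
    "Knorm K (\<lambda>A. translate t (conv_setfun \<mu> N g) A - conv_setfun \<mu> N g A) < ennreal \<epsilon>"
    if t: "Knorm K (\<lambda>A. translate t \<mu> A - \<mu> A) < ennreal (\<epsilon> / c)" for t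
  proof -
    obtain r where r: "Knorm K (\<lambda>A. translate t \<mu> A - \<mu> A) = ennreal r" "0 \<le> r" "r < \<epsilon> / c"
      using t by (cases "Knorm K (\<lambda>A. translate t \<mu> A - \<mu> A)") (auto simp: ennreal_less_iff)
    have "r * measure N (space N) \<le> r * c"
      using r(2) unfolding c_def by (intro mult_left_mono) auto
    also have "\<dots> < \<epsilon>"
      using r(3) \<open>c > 0\<close> by (simp add: pos_less_divide_eq)
    finally have "ennreal (r * measure N (space N)) < ennreal \<epsilon>"
      using \<open>\<epsilon> > 0\<close> by (intro ennreal_lessI)
    moreover have "Knorm K (\<lambda>A. translate t (conv_setfun \<mu> N g) A - conv_setfun \<mu> N g A)
        \<le> ennreal (r * measure N (space N))"
      using r(1,2) by (intro Knorm_translate_conv_setfun_diff_le[OF N g meas fin]) simp_all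
    ultimately show ?thesis
      by (rule le_less_trans[rotated])
  qed
  have "relatively_dense {t. Knorm K (\<lambda>A. translate t \<mu> A - \<mu> A) < ennreal (\<epsilon> / c)}"
    using nap[unfolded norm_almost_periodic_def, rule_format, of "\<epsilon> / c"] \<open>\<epsilon> > 0\<close> \<open>c > 0\<close>
    by simp
  then show "relatively_dense
      {t. Knorm K (\<lambda>A. translate t (conv_setfun \<mu> N g) A - conv_setfun \<mu> N g A) < ennreal \<epsilon>}"
    by (rule relatively_dense_mono) (use almost_period in blast)
qed

lemma measurable_translates_cmeas:
  fixes M :: "'a::{topological_ab_group_add,t2_space} measure"
  assumes "complex_radon M h" "sets N = sets borel" "compact K"
  shows "measurable_translates K N (cmeas M h)"
proof (rule measurable_translatesI)
  have M: "radon_measure M" and hM: "h \<in> borel_measurable M" and h1: "\<And>x. cmod (h x) = 1"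
    using assms(1) unfolding complex_radon_def by auto
  have h: "h \<in> borel_measurable borel" "\<And>x. cmod (h x) \<le> 1"
    using hM h1 unfolding measurable_cong_sets[OF sets_radon_measure[OF M] refl] by simp_all
  fix B s assume "B \<in> sets borel" "B \<subseteq> (+) s ` K"
  then show "(\<lambda>y. cmeas M h ((+) (- y) ` B)) \<in> borel_measurable N"
    unfolding cmeas_def measurable_cong_sets[OF assms(2) refl]
    by (rule borel_measurable_set_integral_translation[OF M h compact_group_translation[OF assms(3)]])
qed

theorem proposition6p2:
  fixes M N :: "'a::{topological_ab_group_add, t2_space} measure"
    and h g :: "'a \<Rightarrow> complex"
    and K :: "'a set"
  assumes "locally_compact_space (euclidean :: 'a topology)"
    and "compact K" and "interior K \<noteq> {}"
    and "complex_radon M h"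
    and "finite_complex_radon N g"
    and "norm_almost_periodic K (cmeas M h)"
  shows "norm_almost_periodic K (conv_meas M h N g)"
proof -
  have N: "finite_measure N" and g: "g \<in> borel_measurable N" "\<And>y. cmod (g y) \<le> 1"
    and sN: "sets N = sets borel"
    using assms(5) sets_radon_measure[of N]
    unfolding finite_complex_radon_def complex_radon_def by (auto intro: finite_measureI)
  show ?thesis
    unfolding conv_meas_eq_conv_setfun
    by (rule norm_almost_periodic_conv_setfun[OF N g measurable_translates_cmeas[OF assms(4) sN assms(2)]
          Knorm_cmeas_less_top[OF assms(4,2,6)] assms(6)])
qed

end
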